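(* Let $X,Y,A,B$ be finite sets. Then the formal identity map $\mathcal S_1^{A,X}\otimes_{(2,C)}\mathcal S_1^{B,Y}\to\mathcal O^{\mathcal R_{\rm lowc}}_{XY,AB}$ is an isometric complete contraction.
   Context: $\mathcal S_1^{A,X}$: operators $\mathbb C^A\to\mathbb C^X$, matrix units $\epsilon_{x,a}=e_xe_a^*$, operator space structure as the predual of $M_{A,X}$ via $\langle S,T\rangle={\rm Tr}(ST)$; similarly $\mathcal S_1^{B,Y}$. $\mathcal R_{\rm lowc}$: all finite entrywise direct sums of column isometries $[U_i\otimes V_i]_{i=1}^n$, where $S_i,T_i$ are finite sets, $U_i:\mathbb C^X\to\mathbb C^A\otimes\mathbb C^{S_i}$ with $\sum_iU_i^*U_i=I_X$ and $V_i:\mathbb C^Y\to\mathbb C^B\otimes\mathbb C^{T_i}$ isometries; each is a block operator isometry $W=(W_{(a,b),(x,y)})$ over $(X\times Y,A\times B)$ with entries in $\mathcal B(\mathbb C,\bigoplus_i\mathbb C^{S_i}\otimes\mathbb C^{T_i})$, $W_{(a,b),(x,y)}=((U_i)_{a,x}\otimes(V_i)_{b,y})_i$ where $U_ie_x=\sum_ae_a\otimes(U_i)_{a,x}$. With $\phi_W(\epsilon_{x,a}\otimes\epsilon_{y,b})=W_{(a,b),(x,y)}$, $\mathcal O^{\mathcal R_{\rm lowc}}_{XY,AB}$ is $\mathcal S_1^{A,X}\otimes\mathcal S_1^{B,Y}$ with matricial norms $\sup_{W\in\mathcal R_{\rm lowc}}\|\phi_W^{(n)}(\cdot)\|$. For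 a Banach space $\mathcal Y$, let $M_n(\min\ell_2(\mathcal Y))$ be $M_n(\mathcal Y)$ with the norm $\|[y_{i,j}]\|=\sup\{(\sum_i\|\sum_j\xi_jy_{i,j}\|^2)^{1/2}:\xi\in\mathbb C^n,\|\xi\|\le1\}$ (the operator space $\min\ell_2(\mathcal Y)$). An element of $M_n(\mathcal S_1^{A,X}\otimes\mathcal S_1^{B,Y})$ is a linear map $\omega:M_{A,X}\to M_n(\mathcal S_1^{B,Y})$ via the duality, and $\pi_{(2,C)}(\omega)=\|\omega:M_{A,X}\to M_n(\min\ell_2(\mathcal S_1^{B,Y}))\|_{\rm cb}$, where $\mathcal S_1^{B,Y}$ is taken as a Banach space. $\mathcal S_1^{A,X}\otimes_{(2,C)}\mathcal S_1^{B,Y}$ is the tensor product with these matricial norms. "Isometric complete contraction" means completely contractive and isometric at the first matrix level. *)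

theory Defs
  imports Complex_Main "HOL-Library.Extended_Real"
begin

definition opnorm :: "'i set \<Rightarrow> 'j set \<Rightarrow> ('i \<Rightarrow> 'j \<Rightarrow> complex) \<Rightarrow> real" where
  "opnorm I J M = Sup {sqrt (\<Sum>i\<in>I. (cmod (\<Sum>j\<in>J. M i j * \<xi> j))^2) | \<xi>.
                        (\<Sum>j\<in>J. (cmod (\<xi> j))^2) \<le> 1}"

text \<open>Norm of S_1^{B,Y}: S is an operator C^B -> C^Y (entries S y b); its norm is
  the predual norm for the trace duality with M_{Y,B} (operators C^Y -> C^B, entries T b y).\<close>
definition trace_norm :: "('y::finite \<Rightarrow> 'b::finite \<Rightarrow> complex) \<Rightarrow> real" where
  "trace_norm S = Sup {cmod (\<Sum>y\<in>UNIV. \<Sum>b\<in>UNIV. S y b * T b y) | T.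
                        opnorm (UNIV::'b set) (UNIV::'y set) T \<le> 1}"

text \<open>Norm of a matrix [Z r s] (r,s in I) in M_I(min l2(S_1^{B,Y})), S_1 as a Banach space.\<close>
definition minl2_S1_norm :: "'i set \<Rightarrow> ('i \<Rightarrow> 'i \<Rightarrow> 'y::finite \<Rightarrow> 'b::finite \<Rightarrow> complex) \<Rightarrow> real" where
  "minl2_S1_norm I Z = Sup {sqrt (\<Sum>r\<in>I. (trace_norm (\<lambda>y b. \<Sum>s\<in>I. \<xi> s * Z r s y b))^2) | \<xi>.
                        (\<Sum>s\<in>I. (cmod (\<xi> s))^2) \<le> 1}"

text \<open>An element of M_n(S_1^{A,X} \<otimes> S_1^{B,Y}) is represented by its coefficients
  \<omega> j k x a y b (j,k < n) w.r.t. the basis \<epsilon>_{x,a} \<otimes> \<epsilon>_{y,b}.  Via Tr-duality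
  (\<langle>\<epsilon>_{x,a},T\<rangle> = T a x) it is the map T \<mapsto> [\<Sum>_{x,a} T a x \<omega>_{jk}(x,a,\<cdot>,\<cdot>)]_{jk}
  from M_{A,X} to M_n(S_1^{B,Y}).  pi2C is the cb-norm of this map into
  M_n(min l2(S_1^{B,Y})), with M_m(M_n(E)) = M_{m*n}(E) indexed by pairs.\<close>
definition pi2C :: "nat \<Rightarrow> (nat \<Rightarrow> nat \<Rightarrow> 'x::finite \<Rightarrow> 'a::finite \<Rightarrow> 'y::finite \<Rightarrow> 'b::finite \<Rightarrow> complex) \<Rightarrow> ereal" where
  "pi2C n \<omega> = (SUP mT \<in> {(m, T :: nat \<Rightarrow> nat \<Rightarrow> 'a \<Rightarrow> 'x \<Rightarrow> complex).
        opnorm ({..<m} \<times> (UNIV::'a set)) ({..<m} \<times> (UNIV::'x set)) (\<lambda>(p,a) (q,x). T p q a x) \<le> 1}.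
     ereal (minl2_S1_norm ({..<fst mT} \<times> {..<n})
       (\<lambda>(p,j) (q,k) y b. \<Sum>x\<in>UNIV. \<Sum>a\<in>UNIV. snd mT p q a x * \<omega> j k x a y b)))"

text \<open>Membership in R_lowc: m blocks, S_i = {..<p i}, T_i = {..<q i};
  U i a s x = \<langle>e_a \<otimes> e_s, U_i e_x\<rangle>, V i b t y = \<langle>e_b \<otimes> e_t, V_i e_y\<rangle>;
  \<Sum>_i U_i^* U_i = I_X and each V_i an isometry.\<close>
definition lowc :: "nat \<Rightarrow> (nat \<Rightarrow> nat) \<Rightarrow> (nat \<Rightarrow> nat)
    \<Rightarrow> (nat \<Rightarrow> 'a::finite \<Rightarrow> nat \<Rightarrow> 'x::finite \<Rightarrow> complex)
    \<Rightarrow> (nat \<Rightarrow> 'b::finite \<Rightarrow> nat \<Rightarrow> 'y::finite \<Rightarrow> complex) \<Rightarrow> bool" where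
  "lowc m p q U V \<longleftrightarrow>
     (\<forall>x x'. (\<Sum>i<m. \<Sum>a\<in>UNIV. \<Sum>s<p i. cnj (U i a s x) * U i a s x') = (if x = x' then 1 else 0))
   \<and> (\<forall>i<m. \<forall>y y'. (\<Sum>b\<in>UNIV. \<Sum>t<q i. cnj (V i b t y) * V i b t y') = (if y = y' then 1 else 0))"

text \<open>Index set of K = \<Oplus>_i C^{S_i} \<otimes> C^{T_i}.\<close>
definition lowc_index :: "nat \<Rightarrow> (nat \<Rightarrow> nat) \<Rightarrow> (nat \<Rightarrow> nat) \<Rightarrow> (nat \<times> nat \<times> nat) set" where
  "lowc_index m p q = {(i, s, t). i < m \<and> s < p i \<and> t < q i}"

text \<open>Norm of \<phi>_W^{(n)}(\<omega>) in M_n(B(C,K)) = B(C^n, C^n \<otimes> K).\<close>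
definition phiW_norm :: "nat \<Rightarrow> nat \<Rightarrow> (nat \<Rightarrow> nat) \<Rightarrow> (nat \<Rightarrow> nat)
    \<Rightarrow> (nat \<Rightarrow> 'a::finite \<Rightarrow> nat \<Rightarrow> 'x::finite \<Rightarrow> complex)
    \<Rightarrow> (nat \<Rightarrow> 'b::finite \<Rightarrow> nat \<Rightarrow> 'y::finite \<Rightarrow> complex)
    \<Rightarrow> (nat \<Rightarrow> nat \<Rightarrow> 'x \<Rightarrow> 'a \<Rightarrow> 'y \<Rightarrow> 'b \<Rightarrow> complex) \<Rightarrow> real" where
  "phiW_norm n m p q U V \<omega> = opnorm ({..<n} \<times> lowc_index m p q) {..<n}
     (\<lambda>(j, i, s, t) k. \<Sum>x\<in>UNIV. \<Sum>a\<in>UNIV. \<Sum>y\<in>UNIV. \<Sum>b\<in>UNIV.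
          \<omega> j k x a y b * U i a s x * V i b t y)"

definition O_lowc_norm :: "nat \<Rightarrow> (nat \<Rightarrow> nat \<Rightarrow> 'x::finite \<Rightarrow> 'a::finite \<Rightarrow> 'y::finite \<Rightarrow> 'b::finite \<Rightarrow> complex) \<Rightarrow> ereal" where
  "O_lowc_norm n \<omega> = (SUP W \<in> {(m, p, q, U :: nat \<Rightarrow> 'a \<Rightarrow> nat \<Rightarrow> 'x \<Rightarrow> complex,
                                 V :: nat \<Rightarrow> 'b \<Rightarrow> nat \<Rightarrow> 'y \<Rightarrow> complex). lowc m p q U V}.
      (case W of (m, p, q, U, V) \<Rightarrow> ereal (phiW_norm n m p q U V \<omega>)))"

end

theory Submission
  imports Defs "HOL-Analysis.L2_Norm"
begin

(* Write W = [U_i (x) V_i] for an element of R_lowc.  Evaluated on omega, W first applies the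
   column isometry [U_i]_i on the (A, X) side, which is one of the contractions admitted in
   pi_(2,C); then each block is paired with the isometry V_i, and for an isometry the l2-sum of
   these pairings over its columns is at most the trace norm (the pairing of the trace duality
   with a suitable contraction).  Hence O <= pi_(2,C) at every matrix level.

   At the first level the converse holds: a contraction T and a unit vector eta give the column
   contraction R = sum_q eta_q T_(., q).  Pick contractions C_r nearly norming the S_1-norms of
   the resulting rows and dilate both the column R and every C_r to isometries, using a Gram
   (Cholesky) factorisation of the positive defect operators I - R* R and I - C_r* C_r.  This
   yields an element of R_lowc whose value at omega dominates the l2-sum of those S_1-norms. *)

section \<open>Operator norms of finite matrices\<close>

abbreviation sqnorm :: "'j set \<Rightarrow> ('j \<Rightarrow> complex) \<Rightarrow> real" where
  "sqnorm J \<xi> \<equiv> (\<Sum>j\<in>J. (cmod (\<xi> j))\<^sup>2)"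

definition contractive :: "'i set \<Rightarrow> 'j set \<Rightarrow> ('i \<Rightarrow> 'j \<Rightarrow> complex) \<Rightarrow> bool" where
  "contractive I J M \<longleftrightarrow> (\<forall>\<xi>. sqnorm I (\<lambda>i. \<Sum>j\<in>J. M i j * \<xi> j) \<le> sqnorm J \<xi>)"

lemma cmod_sum_mult_sq_le: "(cmod (\<Sum>j\<in>J. a j * b j))\<^sup>2 \<le> sqnorm J a * sqnorm J b"
proof -
  have "cmod (\<Sum>j\<in>J. a j * b j) \<le> (\<Sum>j\<in>J. \<bar>cmod (a j)\<bar> * \<bar>cmod (b j)\<bar>)"
    by (rule order_trans[OF norm_sum]) (simp add: norm_mult)
  also have "\<dots> \<le> L2_set (\<lambda>j. cmod (a j)) J * L2_set (\<lambda>j. cmod (b j)) J"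
    by (rule L2_set_mult_ineq)
  finally have "(cmod (\<Sum>j\<in>J. a j * b j))\<^sup>2 \<le> (L2_set (\<lambda>j. cmod (a j)) J * L2_set (\<lambda>j. cmod (b j)) J)\<^sup>2"
    by (simp add: power_mono)
  then show ?thesis
    by (simp add: power_mult_distrib L2_set_def sum_nonneg)
qed

lemma sqnorm_scale: "sqnorm J (\<lambda>j. c * \<xi> j) = (cmod c)\<^sup>2 * sqnorm J \<xi>"
  by (simp add: norm_mult power_mult_distrib sum_distrib_left)

lemma sqnorm_eq_0_imp: "finite J \<Longrightarrow> sqnorm J \<xi> = 0 \<Longrightarrow> j \<in> J \<Longrightarrow> \<xi> j = 0"
  using sum_nonneg_eq_0_iff[of J "\<lambda>j. (cmod (\<xi> j))\<^sup>2"] by simp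

lemma opnorm_bdd:
  assumes "finite I"
  shows "bdd_above {sqrt (sqnorm I (\<lambda>i. \<Sum>j\<in>J. M i j * \<xi> j)) | \<xi>. sqnorm J \<xi> \<le> 1}"
proof (rule bdd_aboveI[where M = "sqrt (\<Sum>i\<in>I. sqnorm J (M i))"], clarify)
  fix \<xi> :: "'b \<Rightarrow> complex"
  assume "sqnorm J \<xi> \<le> 1"
  then have "(cmod (\<Sum>j\<in>J. M i j * \<xi> j))\<^sup>2 \<le> sqnorm J (M i)" for i
    using cmod_sum_mult_sq_le[where J = J and a = "M i" and b = \<xi>]
      mult_left_mono[of "sqnorm J \<xi>" 1 "sqnorm J (M i)"]
    by (simp add: sum_nonneg)
  then show "sqrt (sqnorm I (\<lambda>i. \<Sum>j\<in>J. M i j * \<xi> j)) \<le> sqrt (\<Sum>i\<in>I. sqnorm J (M i))"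
    by (simp add: sum_mono)
qed

lemma opnorm_upper:
  assumes "finite I" "sqnorm J \<xi> \<le> 1"
  shows "sqrt (sqnorm I (\<lambda>i. \<Sum>j\<in>J. M i j * \<xi> j)) \<le> opnorm I J M"
  unfolding opnorm_def by (rule cSup_upper[OF _ opnorm_bdd[OF assms(1)]]) (use assms(2) in blast)

lemma opnorm_least:
  assumes "\<And>\<xi>. sqnorm J \<xi> \<le> 1 \<Longrightarrow> sqrt (sqnorm I (\<lambda>i. \<Sum>j\<in>J. M i j * \<xi> j)) \<le> c"
  shows "opnorm I J M \<le> c"
  unfolding opnorm_def by (rule cSup_least) (use assms in \<open>auto intro: exI[of _ "\<lambda>_. 0"]\<close>)

lemma contractive_imp_opnorm_le_1: "contractive I J M \<Longrightarrow> opnorm I J M \<le> 1"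
  unfolding contractive_def by (intro opnorm_least) (use order_trans in fastforce)

lemma opnorm_le_1_imp_contractive:
  assumes "finite I" "finite J" and opnorm: "opnorm I J M \<le> 1"
  shows "contractive I J M"
  unfolding contractive_def
proof
  fix \<xi> :: "'b \<Rightarrow> complex"
  define s where "s = sqrt (sqnorm J \<xi>)"
  have s_sq: "s\<^sup>2 = sqnorm J \<xi>"
    unfolding s_def by (simp add: sum_nonneg)
  show "sqnorm I (\<lambda>i. \<Sum>j\<in>J. M i j * \<xi> j) \<le> sqnorm J \<xi>"
  proof (cases "s = 0")
    case True
    then have "\<xi> j = 0" if "j \<in> J" for j
      using sqnorm_eq_0_imp[OF assms(2) _ that] s_sq by simp
    then show ?thesis
      by simp
  next
    case False
    define \<zeta> where "\<zeta> j = \<xi> j / of_real s" for j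
    have \<xi>_eq: "\<xi> j = of_real s * \<zeta> j" for j
      unfolding \<zeta>_def using False by simp
    have "sqnorm J \<xi> = s\<^sup>2 * sqnorm J \<zeta>"
      using sqnorm_scale[where J = J and c = "of_real s" and \<xi> = \<zeta>] by (simp add: \<xi>_eq)
    then have "sqnorm J \<zeta> = 1"
      using s_sq False by (metis mult_cancel_left1 power_not_zero)
    then have "sqrt (sqnorm I (\<lambda>i. \<Sum>j\<in>J. M i j * \<zeta> j)) \<le> 1"
      using opnorm_upper[OF assms(1), where J = J and \<xi> = \<zeta> and M = M] opnorm by linarith
    then have "sqnorm I (\<lambda>i. \<Sum>j\<in>J. M i j * \<zeta> j) \<le> 1"
      by simp
    moreover have "sqnorm I (\<lambda>i. \<Sum>j\<in>J. M i j * \<xi> j) = s\<^sup>2 * sqnorm I (\<lambda>i. \<Sum>j\<in>J. M i j * \<zeta> j)"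
      using sqnorm_scale[where J = I and c = "of_real s" and \<xi> = "\<lambda>i. \<Sum>j\<in>J. M i j * \<zeta> j"]
      by (simp add: \<xi>_eq sum_distrib_left mult_ac)
    ultimately show ?thesis
      using s_sq mult_left_le[of "sqnorm I (\<lambda>i. \<Sum>j\<in>J. M i j * \<zeta> j)" "s\<^sup>2"] by (simp add: sum_nonneg)
  qed
qed

lemma opnorm_le_1_iff: "finite I \<Longrightarrow> finite J \<Longrightarrow> opnorm I J M \<le> 1 \<longleftrightarrow> contractive I J M"
  using contractive_imp_opnorm_le_1 opnorm_le_1_imp_contractive by blast

lemma opnorm_zero_le_1: "opnorm I J (\<lambda>_ _. 0) \<le> 1"
  by (rule opnorm_least) simp

lemma contractive_zero: "contractive I J (\<lambda>_ _. 0)"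
  unfolding contractive_def by (simp add: sum_nonneg)

lemma of_real_cmod_sq: "of_real ((cmod z)\<^sup>2) = cnj z * z"
  by (subst complex_norm_square) (simp add: mult.commute)

lemma of_real_sqnorm_mat_vec:
  fixes W :: "'k \<Rightarrow> 'x \<Rightarrow> complex"
  shows "of_real (sqnorm K (\<lambda>k. \<Sum>x\<in>X. W k x * \<zeta> x))
     = (\<Sum>x\<in>X. \<Sum>x'\<in>X. cnj (\<zeta> x) * (\<Sum>k\<in>K. cnj (W k x) * W k x') * \<zeta> x')"
proof -
  have "of_real ((cmod (\<Sum>x\<in>X. W k x * \<zeta> x))\<^sup>2)
      = (\<Sum>x\<in>X. \<Sum>x'\<in>X. cnj (\<zeta> x) * (cnj (W k x) * W k x') * \<zeta> x')" for k
    unfolding of_real_cmod_sq by (subst sum.swap) (simp add: sum_product mult_ac)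
  then show ?thesis
    by (simp add: sum_distrib_left sum_distrib_right sum.swap[of _ K])
qed

lemma of_real_sqnorm: "of_real (sqnorm X \<zeta>) = (\<Sum>x\<in>X. cnj (\<zeta> x) * \<zeta> x)"
  by (simp only: of_real_sum of_real_cmod_sq)

lemma sqnorm_isometry:
  fixes W :: "'k \<Rightarrow> 'x::finite \<Rightarrow> complex"
  assumes "\<And>x x'. (\<Sum>k\<in>K. cnj (W k x) * W k x') = (if x = x' then 1 else 0)"
  shows "sqnorm K (\<lambda>k. \<Sum>x\<in>UNIV. W k x * \<zeta> x) = sqnorm UNIV \<zeta>"
proof -
  have "of_real (sqnorm K (\<lambda>k. \<Sum>x\<in>UNIV. W k x * \<zeta> x)) = (complex_of_real (sqnorm UNIV \<zeta>))"
    unfolding of_real_sqnorm_mat_vec assms of_real_sqnorm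
    by (simp add: if_distrib if_distribR sum.delta cong: if_cong)
  then show ?thesis
    by (simp only: of_real_eq_iff)
qed

section \<open>The trace norm and the norms of min l2(S_1)\<close>

abbreviation trace_pair :: "('y::finite \<Rightarrow> 'b::finite \<Rightarrow> complex) \<Rightarrow> ('b \<Rightarrow> 'y \<Rightarrow> complex) \<Rightarrow> complex" where
  "trace_pair S T \<equiv> (\<Sum>y\<in>UNIV. \<Sum>b\<in>UNIV. S y b * T b y)"

lemma contractive_entry_le_1:
  assumes "contractive I J T" "finite I" "finite J" "i \<in> I" "j \<in> J"
  shows "cmod (T i j) \<le> 1"
proof -
  have "sqnorm I (\<lambda>i'. T i' j) \<le> 1"
    using spec[OF assms(1)[unfolded contractive_def], of "\<lambda>j'. if j' = j then 1 else 0"] assms(3,5)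
    by (simp add: if_distrib if_distribR cong: if_cong)
  moreover have "(cmod (T i j))\<^sup>2 \<le> sqnorm I (\<lambda>i'. T i' j)"
    using assms(2,4) by (intro member_le_sum) auto
  ultimately have "(cmod (T i j))\<^sup>2 \<le> 1"
    by linarith
  then show ?thesis
    by (simp add: power_le_one_iff abs_square_le_1)
qed

lemma cmod_trace_pair_le_l1:
  fixes S :: "'y::finite \<Rightarrow> 'b::finite \<Rightarrow> complex"
  assumes "opnorm UNIV UNIV T \<le> 1"
  shows "cmod (trace_pair S T) \<le> (\<Sum>y\<in>UNIV. \<Sum>b\<in>UNIV. cmod (S y b))"
proof -
  have "cmod (T b y) \<le> 1" for b y
    using assms by (intro contractive_entry_le_1[of UNIV UNIV]) (simp_all add: opnorm_le_1_iff)
  then have "cmod (S y b * T b y) \<le> cmod (S y b)" for y b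
    using mult_left_le[of "cmod (T b y)" "cmod (S y b)"] by (simp add: norm_mult)
  then show ?thesis
    by (auto intro!: sum_norm_le)
qed

lemma trace_norm_bdd:
  "bdd_above {cmod (trace_pair S T) | T. opnorm UNIV UNIV T \<le> 1}"
  by (rule bdd_aboveI[where M = "\<Sum>y\<in>UNIV. \<Sum>b\<in>UNIV. cmod (S y b)"]) (auto intro: cmod_trace_pair_le_l1)

lemma trace_norm_upper:
  "opnorm UNIV UNIV T \<le> 1 \<Longrightarrow> cmod (trace_pair S T) \<le> trace_norm S"
  unfolding trace_norm_def by (rule cSup_upper[OF _ trace_norm_bdd]) blast

lemma trace_norm_least:
  "(\<And>T. opnorm UNIV UNIV T \<le> 1 \<Longrightarrow> cmod (trace_pair S T) \<le> c) \<Longrightarrow> trace_norm S \<le> c"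
  unfolding trace_norm_def by (rule cSup_least) (use opnorm_zero_le_1 in auto)

lemma trace_norm_nonneg: "0 \<le> trace_norm S"
  using trace_norm_upper[OF opnorm_zero_le_1, of S] by simp

lemma trace_norm_zero: "trace_norm (\<lambda>_ _. 0) = 0"
  by (intro antisym trace_norm_least trace_norm_nonneg) simp

lemma trace_norm_le_l1: "trace_norm S \<le> (\<Sum>y\<in>UNIV. \<Sum>b\<in>UNIV. cmod (S y b))"
  by (intro trace_norm_least cmod_trace_pair_le_l1)

lemma trace_norm_almost_attained:
  fixes S :: "'y::finite \<Rightarrow> 'b::finite \<Rightarrow> complex"
  assumes "z < 1"
  shows "\<exists>T. opnorm UNIV UNIV T \<le> 1 \<and> z * trace_norm S \<le> cmod (trace_pair S T)"
proof (cases "trace_norm S = 0")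
  case True
  then show ?thesis
    using opnorm_zero_le_1 by (auto intro!: exI[of _ "\<lambda>_ _. 0"])
next
  case False
  show ?thesis
  proof (rule ccontr)
    assume none: "\<not> ?thesis"
    have "trace_norm S \<le> z * trace_norm S"
    proof (rule trace_norm_least)
      fix T :: "'b \<Rightarrow> 'y \<Rightarrow> complex"
      assume "opnorm UNIV UNIV T \<le> 1"
      with none show "cmod (trace_pair S T) \<le> z * trace_norm S"
        by auto
    qed
    then show False
      using False assms trace_norm_nonneg[of S] by (simp add: mult_le_cancel_right1)
  qed
qed

lemma isometry_combination_contractive:
  fixes V :: "'b \<Rightarrow> 't \<Rightarrow> 'y::finite \<Rightarrow> complex"
  assumes iso: "\<And>y y'. (\<Sum>b\<in>B. \<Sum>t\<in>Q. cnj (V b t y) * V b t y') = (if y = y' then 1 else 0)"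
    and \<gamma>: "sqnorm Q \<gamma> \<le> 1"
  shows "contractive B UNIV (\<lambda>b y. \<Sum>t\<in>Q. \<gamma> t * V b t y)"
  unfolding contractive_def
proof
  fix \<zeta> :: "'y \<Rightarrow> complex"
  define w where "w b t = (\<Sum>y\<in>UNIV. V b t y * \<zeta> y)" for b t
  have "(cmod (\<Sum>y\<in>UNIV. (\<Sum>t\<in>Q. \<gamma> t * V b t y) * \<zeta> y))\<^sup>2 \<le> sqnorm Q (w b)" for b
  proof -
    have "(\<Sum>y\<in>UNIV. (\<Sum>t\<in>Q. \<gamma> t * V b t y) * \<zeta> y) = (\<Sum>t\<in>Q. \<gamma> t * w b t)"
      unfolding w_def by (simp add: sum_distrib_left sum_distrib_right sum.swap[of _ Q] mult_ac)
    then show ?thesis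
      using cmod_sum_mult_sq_le[where J = Q and a = \<gamma> and b = "w b"]
        mult_right_le_one_le[OF _ _ \<gamma>, of "sqnorm Q (w b)"]
      by (simp add: sum_nonneg mult.commute)
  qed
  then have "sqnorm B (\<lambda>b. \<Sum>y\<in>UNIV. (\<Sum>t\<in>Q. \<gamma> t * V b t y) * \<zeta> y) \<le> (\<Sum>b\<in>B. sqnorm Q (w b))"
    by (rule sum_mono)
  also have "\<dots> = sqnorm (B \<times> Q) (\<lambda>(b, t). \<Sum>y\<in>UNIV. V b t y * \<zeta> y)"
    by (simp add: sum.cartesian_product' w_def)
  also have "\<dots> = sqnorm UNIV \<zeta>"
    using sqnorm_isometry[where K = "B \<times> Q" and W = "\<lambda>(b, t) y. V b t y"] iso
    by (simp add: sum.cartesian_product' case_prod_unfold)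
  finally show "sqnorm B (\<lambda>b. \<Sum>y\<in>UNIV. (\<Sum>t\<in>Q. \<gamma> t * V b t y) * \<zeta> y) \<le> sqnorm UNIV \<zeta>" .
qed

lemma isometry_trace_pair_sq_le:
  fixes V :: "'b::finite \<Rightarrow> 't \<Rightarrow> 'y::finite \<Rightarrow> complex" and S :: "'y \<Rightarrow> 'b \<Rightarrow> complex"
  assumes iso: "\<And>y y'. (\<Sum>b\<in>UNIV. \<Sum>t\<in>Q. cnj (V b t y) * V b t y') = (if y = y' then 1 else 0)"
  shows "(\<Sum>t\<in>Q. (cmod (trace_pair S (\<lambda>b y. V b t y)))\<^sup>2) \<le> (trace_norm S)\<^sup>2"
proof -
  define c where "c t = trace_pair S (\<lambda>b y. V b t y)" for t
  define N where "N = sqrt (sqnorm Q c)"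
  have N_sq: "N\<^sup>2 = sqnorm Q c"
    by (simp add: N_def sum_nonneg)
  show ?thesis
  proof (cases "N = 0")
    case True
    then show ?thesis
      using N_sq by (simp add: c_def)
  next
    case False
    \<comment> \<open>The pairing with the normalised combination of the columns V_t attains the l2-norm of c.\<close>
    define \<gamma> where "\<gamma> t = cnj (c t) / of_real N" for t
    have "sqnorm Q c \<noteq> 0"
      using False by (simp flip: N_sq)
    then have "sqnorm Q \<gamma> = 1"
      using N_sq by (simp add: \<gamma>_def norm_divide power_divide flip: sum_divide_distrib)
    then have "opnorm UNIV UNIV (\<lambda>b y. \<Sum>t\<in>Q. \<gamma> t * V b t y) \<le> 1"
      using isometry_combination_contractive[OF iso] by (simp add: opnorm_le_1_iff)
    then have "cmod (trace_pair S (\<lambda>b y. \<Sum>t\<in>Q. \<gamma> t * V b t y)) \<le> trace_norm S"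
      by (rule trace_norm_upper)
    moreover have "trace_pair S (\<lambda>b y. \<Sum>t\<in>Q. \<gamma> t * V b t y) = (\<Sum>t\<in>Q. \<gamma> t * c t)"
      unfolding c_def by (simp add: sum_distrib_left sum.swap[of _ Q] mult_ac)
    moreover have "(\<Sum>t\<in>Q. \<gamma> t * c t) = of_real (sqnorm Q c) / of_real N"
      unfolding \<gamma>_def of_real_sum of_real_cmod_sq by (simp add: sum_divide_distrib)
    moreover have "(of_real (sqnorm Q c) :: complex) / of_real N = of_real N"
      unfolding N_sq[symmetric] using False by (simp add: power2_eq_square)
    ultimately have "N \<le> trace_norm S"
      by (simp add: N_def)
    then have "N\<^sup>2 \<le> (trace_norm S)\<^sup>2"
      by (rule power_mono) (simp add: N_def sum_nonneg)
    then show ?thesis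
      using N_sq by (simp add: c_def)
  qed
qed

lemma sqnorm_le_1_imp_cmod_le_1:
  assumes "finite I" "sqnorm I \<xi> \<le> 1" "i \<in> I"
  shows "cmod (\<xi> i) \<le> 1"
proof -
  have "(cmod (\<xi> i))\<^sup>2 \<le> sqnorm I \<xi>"
    using assms by (intro member_le_sum) auto
  with assms(2) have "(cmod (\<xi> i))\<^sup>2 \<le> 1"
    by linarith
  then show ?thesis
    by (simp add: power_le_one_iff abs_square_le_1)
qed

lemma minl2_S1_norm_bdd:
  fixes Z :: "'i \<Rightarrow> 'i \<Rightarrow> 'y::finite \<Rightarrow> 'b::finite \<Rightarrow> complex"
  assumes "finite I"
  shows "bdd_above {sqrt (\<Sum>r\<in>I. (trace_norm (\<lambda>y b. \<Sum>s\<in>I. \<xi> s * Z r s y b))\<^sup>2) | \<xi>. sqnorm I \<xi> \<le> 1}"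
proof (rule bdd_aboveI[where M = "sqrt (\<Sum>r\<in>I. (\<Sum>y\<in>UNIV. \<Sum>b\<in>UNIV. \<Sum>s\<in>I. cmod (Z r s y b))\<^sup>2)"], clarify)
  fix \<xi> :: "'i \<Rightarrow> complex"
  assume "sqnorm I \<xi> \<le> 1"
  then have "cmod (\<xi> s * Z r s y b) \<le> cmod (Z r s y b)" if "s \<in> I" for r s y b
    using sqnorm_le_1_imp_cmod_le_1[OF assms _ that] mult_right_le_one_le[of "cmod (Z r s y b)"]
    by (simp add: norm_mult mult.commute)
  then have "cmod (\<Sum>s\<in>I. \<xi> s * Z r s y b) \<le> (\<Sum>s\<in>I. cmod (Z r s y b))" for r y b
    by (intro sum_norm_le)
  then have "trace_norm (\<lambda>y b. \<Sum>s\<in>I. \<xi> s * Z r s y b) \<le> (\<Sum>y\<in>UNIV. \<Sum>b\<in>UNIV. \<Sum>s\<in>I. cmod (Z r s y b))" for r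
    by (intro order_trans[OF trace_norm_le_l1] sum_mono)
  then show "sqrt (\<Sum>r\<in>I. (trace_norm (\<lambda>y b. \<Sum>s\<in>I. \<xi> s * Z r s y b))\<^sup>2)
      \<le> sqrt (\<Sum>r\<in>I. (\<Sum>y\<in>UNIV. \<Sum>b\<in>UNIV. \<Sum>s\<in>I. cmod (Z r s y b))\<^sup>2)"
    by (simp add: sum_mono power_mono trace_norm_nonneg)
qed

lemma minl2_S1_norm_upper:
  fixes Z :: "'i \<Rightarrow> 'i \<Rightarrow> 'y::finite \<Rightarrow> 'b::finite \<Rightarrow> complex"
  assumes "finite I" "sqnorm I \<xi> \<le> 1"
  shows "sqrt (\<Sum>r\<in>I. (trace_norm (\<lambda>y b. \<Sum>s\<in>I. \<xi> s * Z r s y b))\<^sup>2) \<le> minl2_S1_norm I Z"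
  unfolding minl2_S1_norm_def by (rule cSup_upper[OF _ minl2_S1_norm_bdd[OF assms(1)]]) (use assms(2) in blast)

lemma ereal_Sup_setcompr_least:
  fixes f :: "'a \<Rightarrow> real"
  assumes "P x\<^sub>0" "\<And>x. P x \<Longrightarrow> ereal (f x) \<le> c"
  shows "ereal (Sup {f x | x. P x}) \<le> c"
proof (cases c)
  case (real r)
  then show ?thesis
    using assms by (auto intro!: cSup_least)
next
  case MInf
  then show ?thesis
    using assms by fastforce
qed simp

section \<open>Domination of the R_lowc norms by pi_(2,C)\<close>

lemma pi2C_upper:
  fixes \<omega> :: "nat \<Rightarrow> nat \<Rightarrow> 'x::finite \<Rightarrow> 'a::finite \<Rightarrow> 'y::finite \<Rightarrow> 'b::finite \<Rightarrow> complex"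
    and T :: "nat \<Rightarrow> nat \<Rightarrow> 'a \<Rightarrow> 'x \<Rightarrow> complex"
  assumes "opnorm ({..<m} \<times> UNIV) ({..<m} \<times> UNIV) (\<lambda>(p, a) (q, x). T p q a x) \<le> 1"
  shows "ereal (minl2_S1_norm ({..<m} \<times> {..<n})
           (\<lambda>(p, j) (q, k) y b. \<Sum>x\<in>UNIV. \<Sum>a\<in>UNIV. T p q a x * \<omega> j k x a y b)) \<le> pi2C n \<omega>"
  unfolding pi2C_def by (rule SUP_upper2[where i = "(m, T)"]) (use assms in auto)

lemma O_lowc_norm_upper:
  fixes \<omega> :: "nat \<Rightarrow> nat \<Rightarrow> 'x::finite \<Rightarrow> 'a::finite \<Rightarrow> 'y::finite \<Rightarrow> 'b::finite \<Rightarrow> complex"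
  assumes "lowc m p q U V"
  shows "ereal (phiW_norm n m p q U V \<omega>) \<le> O_lowc_norm n \<omega>"
  unfolding O_lowc_norm_def by (rule SUP_upper2[where i = "(m, p, q, U, V)"]) (use assms in auto)

definition first_block_column ::
    "(nat \<Rightarrow> 'k) \<Rightarrow> nat \<Rightarrow> ('k \<Rightarrow> 'a \<Rightarrow> 'x \<Rightarrow> complex) \<Rightarrow> nat \<Rightarrow> nat \<Rightarrow> 'a \<Rightarrow> 'x \<Rightarrow> complex" where
  "first_block_column g N C r q a x = (if q = 0 \<and> r < N then C (g r) a x else 0)"

lemma first_block_column_contractive:
  fixes C :: "'k \<Rightarrow> 'a \<Rightarrow> 'x::finite \<Rightarrow> complex"
  assumes g: "bij_betw g {..<N} K" and C: "contractive (K \<times> UNIV) UNIV (\<lambda>(k, a) x. C k a x)"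
  shows "contractive ({..<Suc N} \<times> UNIV) ({..<Suc N} \<times> UNIV)
           (\<lambda>(r, a) (q, x). first_block_column g N C r q a x)"
  unfolding contractive_def
proof
  fix \<zeta> :: "nat \<times> 'x \<Rightarrow> complex"
  have "sqnorm ({..<Suc N} \<times> UNIV) (\<lambda>i. \<Sum>j\<in>{..<Suc N} \<times> UNIV.
          (\<lambda>(r, a) (q, x). first_block_column g N C r q a x) i j * \<zeta> j)
      = (\<Sum>r<N. sqnorm UNIV (\<lambda>a. \<Sum>x\<in>UNIV. C (g r) a x * \<zeta> (0, x)))"
    by (simp add: sum.cartesian_product' first_block_column_def if_distrib if_distribR sum.If_cases
        cong: if_cong)
  also have "\<dots> = sqnorm (K \<times> UNIV) (\<lambda>(k, a). \<Sum>x\<in>UNIV. C k a x * \<zeta> (0, x))"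
    by (simp add: sum.cartesian_product') (rule sum.reindex_bij_betw[OF g])
  also have "\<dots> \<le> sqnorm UNIV (\<lambda>x. \<zeta> (0, x))"
    using C unfolding contractive_def by (simp add: case_prod_unfold)
  also have "\<dots> \<le> sqnorm ({..<Suc N} \<times> UNIV) \<zeta>"
    unfolding sum.cartesian_product'
    by (rule member_le_sum[where f = "\<lambda>q. sqnorm UNIV (\<lambda>x. \<zeta> (q, x))"]) (auto intro: sum_nonneg)
  finally show "sqnorm ({..<Suc N} \<times> UNIV) (\<lambda>i. \<Sum>j\<in>{..<Suc N} \<times> UNIV.
          (\<lambda>(r, a) (q, x). first_block_column g N C r q a x) i j * \<zeta> j) \<le> sqnorm ({..<Suc N} \<times> UNIV) \<zeta>" .
qed

(* Enumerating K by g turns the column into the first block column of a square block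
   matrix, which is one of the contractions over which pi2C is taken. *)
lemma column_trace_norm_le_pi2C:
  fixes \<omega> :: "nat \<Rightarrow> nat \<Rightarrow> 'x::finite \<Rightarrow> 'a::finite \<Rightarrow> 'y::finite \<Rightarrow> 'b::finite \<Rightarrow> complex"
    and C :: "'k \<Rightarrow> 'a \<Rightarrow> 'x \<Rightarrow> complex"
  assumes "finite K" and C: "contractive (K \<times> UNIV) UNIV (\<lambda>(k, a) x. C k a x)"
    and \<xi>: "sqnorm {..<n} \<xi> \<le> 1"
  shows "ereal (sqrt (\<Sum>k\<in>K. \<Sum>j<n.
           (trace_norm (\<lambda>y b. \<Sum>l<n. \<xi> l * (\<Sum>x\<in>UNIV. \<Sum>a\<in>UNIV. C k a x * \<omega> j l x a y b)))\<^sup>2))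
         \<le> pi2C n \<omega>"
proof -
  define N where "N = card K"
  obtain g where g: "bij_betw g {..<N} K"
    using ex_bij_betw_nat_finite[OF \<open>finite K\<close>] by (auto simp: N_def atLeast0LessThan)
  define T where "T = first_block_column g N C"
  define I where "I = {..<Suc N} \<times> {..<n}"
  define Z where "Z = (\<lambda>(p, j) (q, k) y b. \<Sum>x\<in>UNIV. \<Sum>a\<in>UNIV. T p q a x * \<omega> j k x a y b)"
  have "contractive ({..<Suc N} \<times> UNIV) ({..<Suc N} \<times> UNIV) (\<lambda>(r, a) (q, x). T r q a x)"
    unfolding T_def using g C by (rule first_block_column_contractive)
  then have pi2C: "ereal (minl2_S1_norm I Z) \<le> pi2C n \<omega>"
    unfolding I_def Z_def by (intro pi2C_upper) (simp add: opnorm_le_1_iff)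
  define \<eta> where "\<eta> = (\<lambda>(q :: nat, l). if q = 0 then \<xi> l else 0)"
  have I_sum: "(\<Sum>r\<in>I. f r) = (\<Sum>r<Suc N. \<Sum>j<n. f (r, j))" for f :: "nat \<times> nat \<Rightarrow> real"
    by (simp add: I_def sum.cartesian_product')
  have \<eta>_sum: "(\<Sum>s\<in>I. \<eta> s * F s) = (\<Sum>l<n. \<xi> l * F (0, l))" for F :: "nat \<times> nat \<Rightarrow> complex"
    unfolding I_def sum.cartesian_product' sum.lessThan_Suc_shift by (simp add: \<eta>_def)
  have "sqnorm I \<eta> = sqnorm {..<n} \<xi>"
    unfolding I_def sum.cartesian_product' sum.lessThan_Suc_shift by (simp add: \<eta>_def)
  then have "sqrt (\<Sum>r\<in>I. (trace_norm (\<lambda>y b. \<Sum>s\<in>I. \<eta> s * Z r s y b))\<^sup>2) \<le> minl2_S1_norm I Z"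
    using \<xi> by (intro minl2_S1_norm_upper) (simp_all add: I_def)
  also have "(\<Sum>r\<in>I. (trace_norm (\<lambda>y b. \<Sum>s\<in>I. \<eta> s * Z r s y b))\<^sup>2)
      = (\<Sum>r<N. \<Sum>j<n.
           (trace_norm (\<lambda>y b. \<Sum>l<n. \<xi> l * (\<Sum>x\<in>UNIV. \<Sum>a\<in>UNIV. C (g r) a x * \<omega> j l x a y b)))\<^sup>2)"
  proof -
    have "(\<lambda>y b. \<Sum>s\<in>I. \<eta> s * Z (r, j) s y b) = (if r < N
        then (\<lambda>y b. \<Sum>l<n. \<xi> l * (\<Sum>x\<in>UNIV. \<Sum>a\<in>UNIV. C (g r) a x * \<omega> j l x a y b)) else (\<lambda>_ _. 0))"
      for r j
      by (cases "r < N") (simp_all add: \<eta>_sum Z_def T_def first_block_column_def)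
    then show ?thesis
      by (simp add: I_sum trace_norm_zero)
  qed
  also have "\<dots> = (\<Sum>k\<in>K. \<Sum>j<n.
           (trace_norm (\<lambda>y b. \<Sum>l<n. \<xi> l * (\<Sum>x\<in>UNIV. \<Sum>a\<in>UNIV. C k a x * \<omega> j l x a y b)))\<^sup>2)"
    by (rule sum.reindex_bij_betw[OF g])
  finally show ?thesis
    using pi2C by (meson ereal_less_eq(3) order_trans)
qed

lemma phiW_entry_eq_trace_pair:
  fixes w :: "nat \<Rightarrow> 'x::finite \<Rightarrow> 'a::finite \<Rightarrow> 'y::finite \<Rightarrow> 'b::finite \<Rightarrow> complex"
  shows "(\<Sum>l<n. (\<Sum>x\<in>UNIV. \<Sum>a\<in>UNIV. \<Sum>y\<in>UNIV. \<Sum>b\<in>UNIV. w l x a y b * u a x * v b y) * \<xi> l)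
       = trace_pair (\<lambda>y b. \<Sum>l<n. \<xi> l * (\<Sum>x\<in>UNIV. \<Sum>a\<in>UNIV. u a x * w l x a y b)) v"
  by (simp add: sum_distrib_left sum_distrib_right mult_ac sum.swap[of _ "{..<n}"]
      sum.swap[of _ "UNIV :: 'y set" "UNIV :: 'x set"] sum.swap[of _ "UNIV :: 'y set" "UNIV :: 'a set"]
      sum.swap[of _ "UNIV :: 'b set" "UNIV :: 'x set"] sum.swap[of _ "UNIV :: 'b set" "UNIV :: 'a set"])

lemma sum_Sigma_nested:
  "finite A \<Longrightarrow> (\<And>i. i \<in> A \<Longrightarrow> finite (B i)) \<Longrightarrow> (\<Sum>z\<in>Sigma A B. f z) = (\<Sum>i\<in>A. \<Sum>j\<in>B i. f (i, j))"
  by (subst sum.Sigma) auto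

lemma lowc_index_eq_Sigma: "lowc_index m p q = Sigma {..<m} (\<lambda>i. {..<p i} \<times> {..<q i})"
  by (auto simp: lowc_index_def)

lemma finite_lowc_index: "finite (lowc_index m p q)"
  by (simp add: lowc_index_eq_Sigma)

lemma sum_lowc_index:
  "(\<Sum>z\<in>lowc_index m p q. f z) = (\<Sum>(i, s)\<in>Sigma {..<m} (\<lambda>i. {..<p i}). \<Sum>t<q i. f (i, s, t))"
  by (simp add: lowc_index_eq_Sigma sum_Sigma_nested)

lemma lowc_column_contractive:
  assumes "lowc m p q U V"
  shows "contractive (Sigma {..<m} (\<lambda>i. {..<p i}) \<times> UNIV) UNIV (\<lambda>((i, s), a) x. U i a s x)"
proof -
  have "(\<Sum>k\<in>Sigma {..<m} (\<lambda>i. {..<p i}) \<times> UNIV.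
          cnj ((\<lambda>((i, s), a) x. U i a s x) k x) * (\<lambda>((i, s), a) x. U i a s x) k x')
      = (\<Sum>i<m. \<Sum>s<p i. \<Sum>a\<in>UNIV. cnj (U i a s x) * U i a s x')" for x x'
    by (simp add: sum.cartesian_product' sum_Sigma_nested)
  also have "\<dots> x x' = (\<Sum>i<m. \<Sum>a\<in>UNIV. \<Sum>s<p i. cnj (U i a s x) * U i a s x')" for x x'
    by (intro sum.cong refl sum.swap)
  also have "\<dots> x x' = (if x = x' then 1 else 0)" for x x'
    using assms unfolding lowc_def by blast
  finally show ?thesis
    unfolding contractive_def by (simp add: sqnorm_isometry)
qed

lemma phiW_norm_le_pi2C:
  fixes \<omega> :: "nat \<Rightarrow> nat \<Rightarrow> 'x::finite \<Rightarrow> 'a::finite \<Rightarrow> 'y::finite \<Rightarrow> 'b::finite \<Rightarrow> complex"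
  assumes W: "lowc m p q U V"
  shows "ereal (phiW_norm n m p q U V \<omega>) \<le> pi2C n \<omega>"
  unfolding phiW_norm_def opnorm_def
proof (rule ereal_Sup_setcompr_least[where x\<^sub>0 = "\<lambda>_. 0"])
  fix \<xi> :: "nat \<Rightarrow> complex"
  assume \<xi>: "sqnorm {..<n} \<xi> \<le> 1"
  define K where "K = Sigma {..<m} (\<lambda>i. {..<p i})"
  define S where "S j = (\<lambda>(i, s) y b. \<Sum>l<n. \<xi> l * (\<Sum>x\<in>UNIV. \<Sum>a\<in>UNIV. U i a s x * \<omega> j l x a y b))" for j
  define M where "M = (\<lambda>(j, i, s, t) l. \<Sum>x\<in>UNIV. \<Sum>a\<in>UNIV. \<Sum>y\<in>UNIV. \<Sum>b\<in>UNIV.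
          \<omega> j l x a y b * U i a s x * V i b t y)"
  have entry: "(\<Sum>l<n. M (j, i, s, t) l * \<xi> l) = trace_pair (S j (i, s)) (\<lambda>b y. V i b t y)" for j i s t
    unfolding M_def S_def prod.case by (rule phiW_entry_eq_trace_pair)
  have "sqnorm ({..<n} \<times> lowc_index m p q) (\<lambda>z. \<Sum>l<n. M z l * \<xi> l)
      = (\<Sum>j<n. \<Sum>(i, s)\<in>K. \<Sum>t<q i. (cmod (\<Sum>l<n. M (j, i, s, t) l * \<xi> l))\<^sup>2)"
    unfolding K_def sum.cartesian_product' sum_lowc_index ..
  also have "\<dots> = (\<Sum>j<n. \<Sum>(i, s)\<in>K. \<Sum>t<q i. (cmod (trace_pair (S j (i, s)) (\<lambda>b y. V i b t y)))\<^sup>2)"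
    unfolding entry ..
  also have "\<dots> \<le> (\<Sum>j<n. \<Sum>k\<in>K. (trace_norm (S j k))\<^sup>2)"
    using W unfolding lowc_def K_def by (intro sum_mono) (auto intro!: isometry_trace_pair_sq_le)
  also have "\<dots> = (\<Sum>k\<in>K. \<Sum>j<n. (trace_norm (S j k))\<^sup>2)"
    by (rule sum.swap)
  finally have "ereal (sqrt (sqnorm ({..<n} \<times> lowc_index m p q) (\<lambda>z. \<Sum>l<n. M z l * \<xi> l)))
      \<le> ereal (sqrt (\<Sum>k\<in>K. \<Sum>j<n. (trace_norm (S j k))\<^sup>2))"
    by simp
  also have "\<dots> \<le> pi2C n \<omega>"
    using column_trace_norm_le_pi2C[OF _ lowc_column_contractive[OF W] \<xi>, of \<omega>]
    by (simp add: K_def S_def case_prod_unfold)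
  finally show "ereal (sqrt (sqnorm ({..<n} \<times> lowc_index m p q) (\<lambda>z. \<Sum>l<n. M z l * \<xi> l))) \<le> pi2C n \<omega>"
    unfolding M_def .
qed simp

lemma O_lowc_norm_le_pi2C:
  fixes \<omega> :: "nat \<Rightarrow> nat \<Rightarrow> 'x::finite \<Rightarrow> 'a::finite \<Rightarrow> 'y::finite \<Rightarrow> 'b::finite \<Rightarrow> complex"
  shows "O_lowc_norm n \<omega> \<le> pi2C n \<omega>"
  unfolding O_lowc_norm_def by (rule SUP_least) (auto simp: phiW_norm_le_pi2C)

section \<open>Gram factorisation of positive semidefinite matrices\<close>

lemma sum_if_const: "(\<Sum>x\<in>A. if P then f x else 0) = (if P then sum f A else 0)"
  by simp

definition quad_form :: "('y::finite \<Rightarrow> 'y \<Rightarrow> complex) \<Rightarrow> ('y \<Rightarrow> complex) \<Rightarrow> complex" where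
  "quad_form D v = (\<Sum>y\<in>UNIV. \<Sum>y'\<in>UNIV. cnj (v y) * D y y' * v y')"

definition hermitian :: "('y \<Rightarrow> 'y \<Rightarrow> complex) \<Rightarrow> bool" where
  "hermitian D \<longleftrightarrow> (\<forall>y y'. D y' y = cnj (D y y'))"

definition pos_semidef :: "('y::finite \<Rightarrow> 'y \<Rightarrow> complex) \<Rightarrow> bool" where
  "pos_semidef D \<longleftrightarrow> (\<forall>v. 0 \<le> Re (quad_form D v))"

lemma quad_form_add_delta:
  fixes D :: "'y::finite \<Rightarrow> 'y \<Rightarrow> complex" and v :: "'y \<Rightarrow> complex" and y\<^sub>0 :: 'y
  assumes "hermitian D"
  defines "g \<equiv> \<Sum>z\<in>UNIV. D y\<^sub>0 z * v z"
  shows "quad_form D (\<lambda>z. v z + (if z = y\<^sub>0 then c else 0))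
       = quad_form D v + cnj c * g + c * cnj g + cnj c * c * D y\<^sub>0 y\<^sub>0"
proof -
  have expand: "cnj (v y + (if y = y\<^sub>0 then c else 0)) * D y y' * (v y' + (if y' = y\<^sub>0 then c else 0))
      = cnj (v y) * D y y' * v y' + (if y' = y\<^sub>0 then cnj (v y) * D y y\<^sub>0 * c else 0)
        + (if y = y\<^sub>0 then cnj c * D y\<^sub>0 y' * v y' else 0)
        + (if y = y\<^sub>0 then (if y' = y\<^sub>0 then cnj c * D y\<^sub>0 y\<^sub>0 * c else 0) else 0)" for y y'
    by (auto simp: algebra_simps)
  have "D y y\<^sub>0 = cnj (D y\<^sub>0 y)" for y
    using assms(1) unfolding hermitian_def by blast
  then have "(\<Sum>y\<in>UNIV. cnj (v y) * D y y\<^sub>0 * c) = c * cnj g"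
    unfolding g_def by (simp add: sum_distrib_left mult_ac)
  moreover have "(\<Sum>y'\<in>UNIV. cnj c * D y\<^sub>0 y' * v y') = cnj c * g"
    unfolding g_def by (simp add: sum_distrib_left mult_ac)
  ultimately show ?thesis
    unfolding quad_form_def expand by (simp add: sum.distrib sum_if_const)
qed

lemma hermitian_diag_real:
  assumes "hermitian D"
  shows "D y y = of_real (Re (D y y))"
proof -
  have "D y y = cnj (D y y)"
    using assms unfolding hermitian_def by blast
  then show ?thesis
    by (simp add: complex_eq_iff)
qed

lemma quad_form_delta:
  assumes "hermitian D"
  shows "quad_form D (\<lambda>z. if z = y then 1 else 0) = D y y"
  using quad_form_add_delta[OF assms, where v = "\<lambda>_. 0" and y\<^sub>0 = y and c = 1]
  by (simp add: quad_form_def)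

lemma pos_semidef_diag_nonneg:
  assumes "hermitian D" "pos_semidef D"
  shows "0 \<le> Re (D y y)"
  using assms(2) quad_form_delta[OF assms(1), of y] unfolding pos_semidef_def by metis

(* Since D y0 y0 = 0, the form is affine along the direction of y0, so it would become
   negative for a suitable multiple of that direction. *)
lemma pos_semidef_zero_diag_row:
  fixes D :: "'y::finite \<Rightarrow> 'y \<Rightarrow> complex"
  assumes herm: "hermitian D" and psd: "pos_semidef D" and zero: "D y\<^sub>0 y\<^sub>0 = 0"
  shows "D y\<^sub>0 y = 0"
proof (rule ccontr)
  assume "D y\<^sub>0 y \<noteq> 0"
  then have g_pos: "0 < (cmod (D y\<^sub>0 y))\<^sup>2"
    by simp
  define v where "v = (\<lambda>z. if z = y then (1::complex) else 0)"
  define R where "R = Re (quad_form D v)"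
  define t where "t = (\<bar>R\<bar> + 1) / (2 * (cmod (D y\<^sub>0 y))\<^sup>2)"
  define c where "c = - (of_real t * D y\<^sub>0 y)"
  have Dv: "(\<Sum>z\<in>UNIV. D y\<^sub>0 z * v z) = D y\<^sub>0 y"
    unfolding v_def by (simp add: if_distrib cong: if_cong)
  have "cnj c * D y\<^sub>0 y = - of_real (t * (cmod (D y\<^sub>0 y))\<^sup>2)"
    unfolding c_def of_real_mult of_real_cmod_sq by (simp add: mult_ac)
  moreover have "c * cnj (D y\<^sub>0 y) = - of_real (t * (cmod (D y\<^sub>0 y))\<^sup>2)"
    unfolding c_def of_real_mult of_real_cmod_sq by (simp add: mult_ac)
  ultimately have "Re (quad_form D (\<lambda>z. v z + (if z = y\<^sub>0 then c else 0))) = R - 2 * (t * (cmod (D y\<^sub>0 y))\<^sup>2)"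
    unfolding quad_form_add_delta[OF herm] Dv zero R_def by simp
  also have "2 * (t * (cmod (D y\<^sub>0 y))\<^sup>2) = \<bar>R\<bar> + 1"
    unfolding t_def using g_pos by simp
  finally have "Re (quad_form D (\<lambda>z. v z + (if z = y\<^sub>0 then c else 0))) = R - (\<bar>R\<bar> + 1)" .
  moreover have "0 \<le> Re (quad_form D (\<lambda>z. v z + (if z = y\<^sub>0 then c else 0)))"
    using psd unfolding pos_semidef_def by blast
  ultimately show False
    using abs_ge_self[of R] by linarith
qed

definition schur_vector :: "('y \<Rightarrow> 'y \<Rightarrow> complex) \<Rightarrow> 'y \<Rightarrow> 'y \<Rightarrow> complex" where
  "schur_vector D y\<^sub>0 y = D y\<^sub>0 y / of_real (sqrt (Re (D y\<^sub>0 y\<^sub>0)))"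

lemma schur_vector_gram:
  assumes "hermitian D" "0 < Re (D y\<^sub>0 y\<^sub>0)"
  shows "cnj (schur_vector D y\<^sub>0 y) * schur_vector D y\<^sub>0 y' = D y y\<^sub>0 * D y\<^sub>0 y' / D y\<^sub>0 y\<^sub>0"
proof -
  have "of_real (sqrt (Re (D y\<^sub>0 y\<^sub>0))) * of_real (sqrt (Re (D y\<^sub>0 y\<^sub>0))) = (of_real (Re (D y\<^sub>0 y\<^sub>0)) :: complex)"
    using assms(2) by (simp flip: of_real_mult)
  moreover have "D y y\<^sub>0 = cnj (D y\<^sub>0 y)"
    using assms(1) unfolding hermitian_def by blast
  ultimately show ?thesis
    unfolding schur_vector_def by (simp flip: hermitian_diag_real[OF assms(1)])
qed

lemma hermitian_schur_complement:
  assumes herm: "hermitian D" and pos: "0 < Re (D y\<^sub>0 y\<^sub>0)"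
  shows "hermitian (\<lambda>y y'. D y y' - cnj (schur_vector D y\<^sub>0 y) * schur_vector D y\<^sub>0 y')"
  unfolding hermitian_def schur_vector_gram[OF assms]
proof (intro allI)
  fix y y'
  have "D y' y = cnj (D y y')" "D y' y\<^sub>0 = cnj (D y\<^sub>0 y')" "D y\<^sub>0 y = cnj (D y y\<^sub>0)"
    using herm unfolding hermitian_def by blast+
  moreover have "cnj (D y\<^sub>0 y\<^sub>0) = D y\<^sub>0 y\<^sub>0"
    using hermitian_diag_real[OF herm, of y\<^sub>0] by (metis complex_cnj_complex_of_real)
  ultimately show "D y' y - D y' y\<^sub>0 * D y\<^sub>0 y / D y\<^sub>0 y\<^sub>0 = cnj (D y y' - D y y\<^sub>0 * D y\<^sub>0 y' / D y\<^sub>0 y\<^sub>0)"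
    by (simp add: mult.commute)
qed

lemma pos_semidef_schur_complement:
  fixes D :: "'y::finite \<Rightarrow> 'y \<Rightarrow> complex"
  assumes herm: "hermitian D" and psd: "pos_semidef D" and pos: "0 < Re (D y\<^sub>0 y\<^sub>0)"
  shows "pos_semidef (\<lambda>y y'. D y y' - cnj (schur_vector D y\<^sub>0 y) * schur_vector D y\<^sub>0 y')"
  unfolding pos_semidef_def
proof
  fix v :: "'y \<Rightarrow> complex"
  define g where "g = (\<Sum>z\<in>UNIV. D y\<^sub>0 z * v z)"
  have "D y y\<^sub>0 = cnj (D y\<^sub>0 y)" for y
    using herm unfolding hermitian_def by blast
  then have col: "(\<Sum>y\<in>UNIV. cnj (v y) * D y y\<^sub>0) = cnj g"
    unfolding g_def by (simp add: mult.commute)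
  have "quad_form (\<lambda>y y'. D y y' - cnj (schur_vector D y\<^sub>0 y) * schur_vector D y\<^sub>0 y') v
      = quad_form D v - (\<Sum>y\<in>UNIV. \<Sum>y'\<in>UNIV. cnj (v y) * (D y y\<^sub>0 * D y\<^sub>0 y' / D y\<^sub>0 y\<^sub>0) * v y')"
    unfolding quad_form_def schur_vector_gram[OF herm pos] by (simp add: algebra_simps sum_subtractf)
  also have "(\<Sum>y\<in>UNIV. \<Sum>y'\<in>UNIV. cnj (v y) * (D y y\<^sub>0 * D y\<^sub>0 y' / D y\<^sub>0 y\<^sub>0) * v y')
      = (\<Sum>y\<in>UNIV. cnj (v y) * D y y\<^sub>0) * g / D y\<^sub>0 y\<^sub>0"
    unfolding g_def by (simp add: sum_distrib_left sum_distrib_right sum_divide_distrib mult_ac)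
  finally have "quad_form (\<lambda>y y'. D y y' - cnj (schur_vector D y\<^sub>0 y) * schur_vector D y\<^sub>0 y') v
      = quad_form D v - cnj g * g / D y\<^sub>0 y\<^sub>0"
    unfolding col .
  also have "\<dots> = quad_form D (\<lambda>z. v z + (if z = y\<^sub>0 then - g / D y\<^sub>0 y\<^sub>0 else 0))"
    unfolding quad_form_add_delta[OF herm] g_def[symmetric] using pos hermitian_diag_real[OF herm, of y\<^sub>0]
    by (auto simp: field_simps)
  finally show "0 \<le> Re (quad_form (\<lambda>y y'. D y y' - cnj (schur_vector D y\<^sub>0 y) * schur_vector D y\<^sub>0 y') v)"
    using psd unfolding pos_semidef_def by simp
qed

lemma gram_factorization_supported:
  fixes D :: "'y::finite \<Rightarrow> 'y \<Rightarrow> complex"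
  assumes "finite F" "hermitian D" "pos_semidef D" "\<And>y y'. y \<notin> F \<Longrightarrow> D y y' = 0"
  shows "\<exists>(d::nat) w. \<forall>y y'. D y y' = (\<Sum>t<d. cnj (w t y) * w t y')"
  using assms
proof (induction F arbitrary: D rule: finite_induct)
  case empty
  show ?case
    by (rule exI[of _ 0], rule exI[of _ "\<lambda>_ _. 0"]) (simp add: empty.prems(3))
next
  case (insert y\<^sub>0 F)
  note herm = insert.prems(1) and psd = insert.prems(2) and supp = insert.prems(3)
  show ?case
  proof (cases "D y\<^sub>0 y\<^sub>0 = 0")
    case True
    then have "D y\<^sub>0 y = 0" for y
      using pos_semidef_zero_diag_row[OF herm psd] by blast
    then have "D y y' = 0" if "y \<notin> F" for y y'
      using supp that by (cases "y = y\<^sub>0") auto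
    then show ?thesis
      using insert.IH[OF herm psd] by blast
  next
    case False
    then have pos: "0 < Re (D y\<^sub>0 y\<^sub>0)"
      using pos_semidef_diag_nonneg[OF herm psd, of y\<^sub>0] hermitian_diag_real[OF herm, of y\<^sub>0]
      by (metis less_eq_real_def of_real_0)
    define w\<^sub>0 where "w\<^sub>0 = schur_vector D y\<^sub>0"
    have "D y y' - cnj (w\<^sub>0 y) * w\<^sub>0 y' = 0" if "y \<notin> F" for y y'
      using False supp[of y] supp[of y y\<^sub>0] that
      unfolding w\<^sub>0_def schur_vector_gram[OF herm pos] by (cases "y = y\<^sub>0") auto
    then obtain d :: nat and w where w: "\<And>y y'. D y y' - cnj (w\<^sub>0 y) * w\<^sub>0 y' = (\<Sum>t<d. cnj (w t y) * w t y')"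
      using insert.IH[OF hermitian_schur_complement[OF herm pos] pos_semidef_schur_complement[OF herm psd pos]]
      unfolding w\<^sub>0_def by blast
    have "D y y' = (\<Sum>t<Suc d. cnj ((w(d := w\<^sub>0)) t y) * (w(d := w\<^sub>0)) t y')" for y y'
      using w[of y y'] by (simp add: diff_eq_eq)
    then show ?thesis
      by blast
  qed
qed

lemma contractive_gram_complement:
  fixes W :: "'k \<Rightarrow> 'x::finite \<Rightarrow> complex"
  assumes "contractive K UNIV W"
  shows "\<exists>(d::nat) (w :: nat \<Rightarrow> 'x \<Rightarrow> complex). \<forall>x x'.
           (\<Sum>k\<in>K. cnj (W k x) * W k x') + (\<Sum>t<d. cnj (w t x) * w t x') = (if x = x' then 1 else 0)"
proof -
  define D where "D x x' = (if x = x' then 1 else 0) - (\<Sum>k\<in>K. cnj (W k x) * W k x')" for x x'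
  have "hermitian D"
    unfolding hermitian_def D_def by (simp add: mult.commute)
  moreover have "pos_semidef D"
    unfolding pos_semidef_def
  proof
    fix v :: "'x \<Rightarrow> complex"
    have "quad_form D v = (\<Sum>x\<in>UNIV. \<Sum>x'\<in>UNIV. cnj (v x) * (if x = x' then 1 else 0) * v x')
        - (\<Sum>x\<in>UNIV. \<Sum>x'\<in>UNIV. cnj (v x) * (\<Sum>k\<in>K. cnj (W k x) * W k x') * v x')"
      unfolding quad_form_def D_def by (simp add: right_diff_distrib left_diff_distrib sum_subtractf)
    also have "(\<Sum>x\<in>UNIV. \<Sum>x'\<in>UNIV. cnj (v x) * (if x = x' then 1 else 0) * v x') = of_real (sqnorm UNIV v)"
      unfolding of_real_sqnorm by (simp add: if_distrib if_distribR sum.delta cong: if_cong)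
    also have "(\<Sum>x\<in>UNIV. \<Sum>x'\<in>UNIV. cnj (v x) * (\<Sum>k\<in>K. cnj (W k x) * W k x') * v x')
        = of_real (sqnorm K (\<lambda>k. \<Sum>x\<in>UNIV. W k x * v x))"
      by (rule of_real_sqnorm_mat_vec[symmetric])
    finally show "0 \<le> Re (quad_form D v)"
      using assms unfolding contractive_def by simp
  qed
  ultimately have "\<exists>(d::nat) w. \<forall>x x'. D x x' = (\<Sum>t<d. cnj (w t x) * w t x')"
    by (intro gram_factorization_supported[OF finite_UNIV]) auto
  then obtain d :: nat and w where w: "\<And>x x'. D x x' = (\<Sum>t<d. cnj (w t x) * w t x')"
    by blast
  have "(\<Sum>k\<in>K. cnj (W k x) * W k x') + (\<Sum>t<d. cnj (w t x) * w t x') = (if x = x' then 1 else 0)" for x x'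
    using w[of x x'] unfolding D_def by (simp add: algebra_simps)
  then show ?thesis
    by blast
qed

section \<open>Isometric dilations and the first matrix level\<close>

lemma contractive_isometric_dilation:
  fixes C :: "'b::finite \<Rightarrow> 'y::finite \<Rightarrow> complex"
  assumes "contractive UNIV UNIV C"
  shows "\<exists>(d::nat) (V :: 'b \<Rightarrow> nat \<Rightarrow> 'y \<Rightarrow> complex).
           (\<forall>y y'. (\<Sum>b\<in>UNIV. \<Sum>t<Suc d. cnj (V b t y) * V b t y') = (if y = y' then 1 else 0))
         \<and> (\<forall>b y. V b 0 y = C b y)"
proof -
  obtain d :: nat and w :: "nat \<Rightarrow> 'y \<Rightarrow> complex"
    where w: "\<And>y y'. (\<Sum>b\<in>UNIV. cnj (C b y) * C b y') + (\<Sum>t<d. cnj (w t y) * w t y') = (if y = y' then 1 else 0)"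
    using contractive_gram_complement[OF assms] by blast
  define b\<^sub>0 :: 'b where "b\<^sub>0 = undefined"
  define V where "V b t y = (if t = 0 then C b y else if b = b\<^sub>0 then w (t - 1) y else 0)" for b t y
  have "(\<Sum>t<Suc d. cnj (V b t y) * V b t y')
      = cnj (C b y) * C b y' + (if b = b\<^sub>0 then \<Sum>t<d. cnj (w t y) * w t y' else 0)" for b y y'
    unfolding sum.lessThan_Suc_shift by (cases "b = b\<^sub>0") (simp_all add: V_def)
  then have "(\<Sum>b\<in>UNIV. \<Sum>t<Suc d. cnj (V b t y) * V b t y') = (if y = y' then 1 else 0)" for y y'
    using w[of y y'] by (simp add: sum.distrib)
  moreover have "V b 0 y = C b y" for b y
    by (simp add: V_def)
  ultimately show ?thesis
    by blast
qed

lemma contractive_column_dilation: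
  fixes R :: "nat \<Rightarrow> 'a::finite \<Rightarrow> 'x::finite \<Rightarrow> complex"
  assumes "contractive ({..<m} \<times> UNIV) UNIV (\<lambda>(r, a) x. R r a x)"
  shows "\<exists>(d::nat) (U :: nat \<Rightarrow> 'a \<Rightarrow> nat \<Rightarrow> 'x \<Rightarrow> complex).
           (\<forall>x x'. (\<Sum>i<Suc m. \<Sum>a\<in>UNIV. \<Sum>s<(if i < m then 1 else d). cnj (U i a s x) * U i a s x')
                    = (if x = x' then 1 else 0))
         \<and> (\<forall>i a x. i < m \<longrightarrow> U i a 0 x = R i a x)"
proof -
  obtain d :: nat and u :: "nat \<Rightarrow> 'x \<Rightarrow> complex"
    where u: "\<And>x x'. (\<Sum>k\<in>{..<m} \<times> UNIV. cnj ((\<lambda>(r, a) x. R r a x) k x) * (\<lambda>(r, a) x. R r a x) k x')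
                + (\<Sum>t<d. cnj (u t x) * u t x') = (if x = x' then 1 else 0)"
    using contractive_gram_complement[OF assms] by blast
  define a\<^sub>0 :: 'a where "a\<^sub>0 = undefined"
  define U where "U i a s x = (if i < m then R i a x else if a = a\<^sub>0 then u s x else 0)" for i a s x
  have "cnj (U m a s x) * U m a s x' = (if a = a\<^sub>0 then cnj (u s x) * u s x' else 0)" for a s x x'
    by (simp add: U_def)
  then have "(\<Sum>i<Suc m. \<Sum>a\<in>UNIV. \<Sum>s<(if i < m then 1 else d). cnj (U i a s x) * U i a s x')
      = (\<Sum>i<m. \<Sum>a\<in>UNIV. cnj (R i a x) * R i a x') + (\<Sum>t<d. cnj (u t x) * u t x')" for x x'
    by (simp add: U_def sum_if_const)
  also have "\<dots> x x' = (if x = x' then 1 else 0)" for x x'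
    using u[of x x'] by (simp add: sum.cartesian_product')
  finally show ?thesis
    by (intro exI[of _ d] exI[of _ U]) (simp add: U_def)
qed

(* The extra block m carries the defect of the column R, paired with an isometric
   dilation of the zero map. *)
lemma lowc_dilation:
  fixes R :: "nat \<Rightarrow> 'a::finite \<Rightarrow> 'x::finite \<Rightarrow> complex" and C :: "nat \<Rightarrow> 'b::finite \<Rightarrow> 'y::finite \<Rightarrow> complex"
  assumes R: "contractive ({..<m} \<times> UNIV) UNIV (\<lambda>(r, a) x. R r a x)"
    and C: "\<And>r. contractive UNIV UNIV (C r)"
  shows "\<exists>p q U V. lowc (Suc m) p q U V
           \<and> (\<forall>i<m. p i = 1 \<and> 0 < q i \<and> (\<forall>a x. U i a 0 x = R i a x) \<and> (\<forall>b y. V i b 0 y = C i b y))"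
proof -
  obtain d :: nat and U where U: "\<And>x x'. (\<Sum>i<Suc m. \<Sum>a\<in>UNIV. \<Sum>s<(if i < m then 1 else d). cnj (U i a s x) * U i a s x')
                    = (if x = x' then 1 else 0)"
    and U_R: "\<And>i a x. i < m \<Longrightarrow> U i a 0 x = R i a x"
    using contractive_column_dilation[OF R] by blast
  define C' where "C' r = (if r < m then C r else (\<lambda>_ _. 0))" for r
  have "contractive UNIV UNIV (C' r)" for r
    by (simp add: C'_def C contractive_zero)
  then have "\<forall>r. \<exists>(e::nat) (V :: 'b \<Rightarrow> nat \<Rightarrow> 'y \<Rightarrow> complex).
           (\<forall>y y'. (\<Sum>b\<in>UNIV. \<Sum>t<Suc e. cnj (V b t y) * V b t y') = (if y = y' then 1 else 0))
         \<and> (\<forall>b y. V b 0 y = C' r b y)"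
    by (blast intro: contractive_isometric_dilation)
  from choice[OF this] obtain e :: "nat \<Rightarrow> nat" where "\<forall>r. \<exists>V :: 'b \<Rightarrow> nat \<Rightarrow> 'y \<Rightarrow> complex.
           (\<forall>y y'. (\<Sum>b\<in>UNIV. \<Sum>t<Suc (e r). cnj (V b t y) * V b t y') = (if y = y' then 1 else 0))
         \<and> (\<forall>b y. V b 0 y = C' r b y)"
    by blast
  from choice[OF this] obtain V :: "nat \<Rightarrow> 'b \<Rightarrow> nat \<Rightarrow> 'y \<Rightarrow> complex"
    where "\<forall>r. (\<forall>y y'. (\<Sum>b\<in>UNIV. \<Sum>t<Suc (e r). cnj (V r b t y) * V r b t y') = (if y = y' then 1 else 0))
               \<and> (\<forall>b y. V r b 0 y = C' r b y)"
    by blast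
  then have V: "\<And>r y y'. (\<Sum>b\<in>UNIV. \<Sum>t<Suc (e r). cnj (V r b t y) * V r b t y') = (if y = y' then 1 else 0)"
      and V_C: "\<And>r b y. V r b 0 y = C' r b y"
    by blast+
  have "lowc (Suc m) (\<lambda>i. if i < m then 1 else d) (\<lambda>i. Suc (e i)) U V"
    unfolding lowc_def by (intro conjI allI impI U V)
  then show ?thesis
    using U_R V_C unfolding C'_def by (intro exI[of _ "\<lambda>i. if i < m then 1 else d"] exI[of _ "\<lambda>i. Suc (e i)"] exI[of _ U] exI[of _ V]) simp
qed

lemma column_trace_pair_le_O_lowc:
  fixes \<omega> :: "nat \<Rightarrow> nat \<Rightarrow> 'x::finite \<Rightarrow> 'a::finite \<Rightarrow> 'y::finite \<Rightarrow> 'b::finite \<Rightarrow> complex"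
    and R :: "nat \<Rightarrow> 'a \<Rightarrow> 'x \<Rightarrow> complex" and C :: "nat \<Rightarrow> 'b \<Rightarrow> 'y \<Rightarrow> complex"
  assumes R: "contractive ({..<m} \<times> UNIV) UNIV (\<lambda>(r, a) x. R r a x)"
    and C: "\<And>r. contractive UNIV UNIV (C r)"
  shows "ereal (sqrt (\<Sum>r<m. (cmod (trace_pair (\<lambda>y b. \<Sum>x\<in>UNIV. \<Sum>a\<in>UNIV. R r a x * \<omega> 0 0 x a y b) (C r)))\<^sup>2))
         \<le> O_lowc_norm 1 \<omega>"
proof -
  obtain p q U V where W: "lowc (Suc m) p q U V"
    and dil: "\<And>i. i < m \<Longrightarrow> p i = 1 \<and> 0 < q i \<and> (\<forall>a x. U i a 0 x = R i a x) \<and> (\<forall>b y. V i b 0 y = C i b y)"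
    using lowc_dilation[where C = C, OF R C] by blast
  define M where "M = (\<lambda>(j, i, s, t) l. \<Sum>x\<in>UNIV. \<Sum>a\<in>UNIV. \<Sum>y\<in>UNIV. \<Sum>b\<in>UNIV.
          \<omega> j l x a y b * U i a s x * V i b t y)"
  define f where "f z = (cmod (\<Sum>l<1. M z l * 1))\<^sup>2" for z
  have "f (0, r, 0, 0) = (cmod (trace_pair (\<lambda>y b. \<Sum>x\<in>UNIV. \<Sum>a\<in>UNIV. R r a x * \<omega> 0 0 x a y b) (C r)))\<^sup>2"
    if "r < m" for r
    using phiW_entry_eq_trace_pair[where n = 1 and w = "\<omega> 0" and u = "\<lambda>a x. U r a 0 x" and v = "\<lambda>b y. V r b 0 y" and \<xi> = "\<lambda>_. 1"]
      dil[OF that] by (simp add: f_def M_def)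
  then have "(\<Sum>r<m. (cmod (trace_pair (\<lambda>y b. \<Sum>x\<in>UNIV. \<Sum>a\<in>UNIV. R r a x * \<omega> 0 0 x a y b) (C r)))\<^sup>2)
      = sum f ((\<lambda>r. (0, r, 0, 0)) ` {..<m})"
    by (simp add: sum.reindex inj_on_def)
  also have "\<dots> \<le> sum f ({..<1} \<times> lowc_index (Suc m) p q)"
  proof (rule sum_mono2)
    show "finite ({..<1::nat} \<times> lowc_index (Suc m) p q)"
      by (simp add: finite_lowc_index)
    show "(\<lambda>r. (0, r, 0, 0)) ` {..<m} \<subseteq> {..<1::nat} \<times> lowc_index (Suc m) p q"
      using dil by (auto simp: lowc_index_def)
  qed (simp add: f_def)
  also have "\<dots> = sqnorm ({..<1} \<times> lowc_index (Suc m) p q) (\<lambda>z. \<Sum>l<1. M z l * 1)"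
    by (simp add: f_def)
  finally have "sqrt (\<Sum>r<m. (cmod (trace_pair (\<lambda>y b. \<Sum>x\<in>UNIV. \<Sum>a\<in>UNIV. R r a x * \<omega> 0 0 x a y b) (C r)))\<^sup>2)
      \<le> sqrt (sqnorm ({..<1} \<times> lowc_index (Suc m) p q) (\<lambda>z. \<Sum>l<1. M z l * (\<lambda>_. 1) l))"
    by simp
  also have "\<dots> \<le> phiW_norm 1 (Suc m) p q U V \<omega>"
    unfolding phiW_norm_def M_def by (rule opnorm_upper) (simp_all add: finite_lowc_index)
  finally show ?thesis
    using O_lowc_norm_upper[OF W, of 1 \<omega>] by (meson ereal_less_eq(3) order_trans)
qed

lemma column_trace_norm_le_O_lowc:
  fixes \<omega> :: "nat \<Rightarrow> nat \<Rightarrow> 'x::finite \<Rightarrow> 'a::finite \<Rightarrow> 'y::finite \<Rightarrow> 'b::finite \<Rightarrow> complex"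
    and R :: "nat \<Rightarrow> 'a \<Rightarrow> 'x \<Rightarrow> complex"
  assumes R: "contractive ({..<m} \<times> UNIV) UNIV (\<lambda>(r, a) x. R r a x)"
  shows "ereal (sqrt (\<Sum>r<m. (trace_norm (\<lambda>y b. \<Sum>x\<in>UNIV. \<Sum>a\<in>UNIV. R r a x * \<omega> 0 0 x a y b))\<^sup>2))
         \<le> O_lowc_norm 1 \<omega>"
proof (rule ereal_le_mult_one_interval)
  define S where "S r = (\<lambda>y b. \<Sum>x\<in>UNIV. \<Sum>a\<in>UNIV. R r a x * \<omega> 0 0 x a y b)" for r
  show "O_lowc_norm 1 \<omega> \<noteq> - \<infinity>"
    using column_trace_pair_le_O_lowc[where C = "\<lambda>_ _ _. 0" and \<omega> = \<omega>, OF R contractive_zero] by auto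
  fix z :: ereal
  assume "0 < z" "z < 1"
  then obtain z' where z: "z = ereal z'" "0 < z'" "z' < 1"
    by (cases z) auto
  have "\<forall>r. \<exists>C. opnorm UNIV UNIV C \<le> 1 \<and> z' * trace_norm (S r) \<le> cmod (trace_pair (S r) C)"
    using trace_norm_almost_attained[OF z(3)] by blast
  from choice[OF this] obtain C where C: "\<And>r. opnorm UNIV UNIV (C r) \<le> 1"
    and near: "\<And>r. z' * trace_norm (S r) \<le> cmod (trace_pair (S r) (C r))"
    by blast
  have "z' * sqrt (\<Sum>r<m. (trace_norm (S r))\<^sup>2) = sqrt (\<Sum>r<m. (z' * trace_norm (S r))\<^sup>2)"
    using z by (simp add: power_mult_distrib real_sqrt_mult flip: sum_distrib_left)
  also have "\<dots> \<le> sqrt (\<Sum>r<m. (cmod (trace_pair (S r) (C r)))\<^sup>2)"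
    using z near by (intro real_sqrt_le_mono sum_mono power_mono) (simp_all add: trace_norm_nonneg)
  finally have "ereal (z' * sqrt (\<Sum>r<m. (trace_norm (S r))\<^sup>2)) \<le> O_lowc_norm 1 \<omega>"
    using column_trace_pair_le_O_lowc[OF R, where C = C and \<omega> = \<omega>] C
    by (simp add: S_def opnorm_le_1_iff) (meson ereal_less_eq(3) order_trans)
  then show "z * ereal (sqrt (\<Sum>r<m. (trace_norm (\<lambda>y b. \<Sum>x\<in>UNIV. \<Sum>a\<in>UNIV. R r a x * \<omega> 0 0 x a y b))\<^sup>2))
      \<le> O_lowc_norm 1 \<omega>"
    by (simp add: z S_def)
qed

lemma contractive_weighted_column:
  fixes T :: "'i \<Rightarrow> 'q \<Rightarrow> 'a \<Rightarrow> 'x \<Rightarrow> complex"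
  assumes T: "contractive (I \<times> UNIV) (Q \<times> UNIV) (\<lambda>(r, a) (q, x). T r q a x)" and \<eta>: "sqnorm Q \<eta> \<le> 1"
  shows "contractive (I \<times> UNIV) UNIV (\<lambda>(r, a) x. \<Sum>q\<in>Q. \<eta> q * T r q a x)"
  unfolding contractive_def
proof
  fix \<zeta> :: "'x \<Rightarrow> complex"
  have "sqnorm (I \<times> UNIV) (\<lambda>k. \<Sum>x\<in>UNIV. (\<lambda>(r, a) x. \<Sum>q\<in>Q. \<eta> q * T r q a x) k x * \<zeta> x)
      = sqnorm (I \<times> UNIV) (\<lambda>k. \<Sum>j\<in>Q \<times> UNIV. (\<lambda>(r, a) (q, x). T r q a x) k j * (\<lambda>(q, x). \<eta> q * \<zeta> x) j)"
    by (simp add: case_prod_unfold sum.cartesian_product' sum_distrib_left sum_distrib_right mult_ac sum.swap[of _ Q])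
  also have "\<dots> \<le> sqnorm (Q \<times> UNIV) (\<lambda>(q, x). \<eta> q * \<zeta> x)"
    using T unfolding contractive_def by blast
  also have "\<dots> = sqnorm Q \<eta> * sqnorm UNIV \<zeta>"
    by (simp add: sum.cartesian_product' norm_mult power_mult_distrib sum_product)
  also have "\<dots> \<le> sqnorm UNIV \<zeta>"
    using \<eta> by (simp add: mult_left_le_one_le sum_nonneg)
  finally show "sqnorm (I \<times> UNIV) (\<lambda>k. \<Sum>x\<in>UNIV. (\<lambda>(r, a) x. \<Sum>q\<in>Q. \<eta> q * T r q a x) k x * \<zeta> x)
      \<le> sqnorm UNIV \<zeta>" .
qed

lemma pi2C_le_O_lowc:
  fixes \<omega> :: "nat \<Rightarrow> nat \<Rightarrow> 'x::finite \<Rightarrow> 'a::finite \<Rightarrow> 'y::finite \<Rightarrow> 'b::finite \<Rightarrow> complex"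
  shows "pi2C 1 \<omega> \<le> O_lowc_norm 1 \<omega>"
  unfolding pi2C_def
proof (rule SUP_least)
  fix mT
  assume "mT \<in> {(m, T :: nat \<Rightarrow> nat \<Rightarrow> 'a \<Rightarrow> 'x \<Rightarrow> complex).
              opnorm ({..<m} \<times> UNIV) ({..<m} \<times> UNIV) (\<lambda>(p, a) (q, x). T p q a x) \<le> 1}"
  then obtain m T where mT: "mT = (m, T)"
    and T: "opnorm ({..<m} \<times> UNIV) ({..<m} \<times> UNIV) (\<lambda>(p, a) (q, x). T p q a x) \<le> 1"
    by blast
  define I where "I = {..<m} \<times> {..<1::nat}"
  define Z where "Z = (\<lambda>(p, j) (q, k) y b. \<Sum>x\<in>UNIV. \<Sum>a\<in>UNIV. T p q a x * \<omega> j k x a y b)"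
  have "ereal (minl2_S1_norm I Z) \<le> O_lowc_norm 1 \<omega>"
    unfolding minl2_S1_norm_def
  proof (rule ereal_Sup_setcompr_least[where x\<^sub>0 = "\<lambda>_. 0"])
    fix \<eta> :: "nat \<times> nat \<Rightarrow> complex"
    assume \<eta>: "sqnorm I \<eta> \<le> 1"
    define R where "R r a x = (\<Sum>q<m. \<eta> (q, 0) * T r q a x)" for r a x
    have "sqnorm {..<m} (\<lambda>q. \<eta> (q, 0)) \<le> 1"
      using \<eta> by (simp add: I_def sum.cartesian_product')
    then have R: "contractive ({..<m} \<times> UNIV) UNIV (\<lambda>(r, a) x. R r a x)"
      unfolding R_def using T by (intro contractive_weighted_column) (simp_all add: opnorm_le_1_iff)
    have "(\<Sum>r\<in>I. (trace_norm (\<lambda>y b. \<Sum>s\<in>I. \<eta> s * Z r s y b))\<^sup>2)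
        = (\<Sum>r<m. (trace_norm (\<lambda>y b. \<Sum>x\<in>UNIV. \<Sum>a\<in>UNIV. R r a x * \<omega> 0 0 x a y b))\<^sup>2)"
      by (simp add: I_def Z_def R_def sum.cartesian_product' sum_distrib_left sum_distrib_right mult_ac
          sum.swap[of _ "{..<m}"])
    then show "ereal (sqrt (\<Sum>r\<in>I. (trace_norm (\<lambda>y b. \<Sum>s\<in>I. \<eta> s * Z r s y b))\<^sup>2)) \<le> O_lowc_norm 1 \<omega>"
      using column_trace_norm_le_O_lowc[OF R, of \<omega>] by simp
  qed simp
  then show "ereal (minl2_S1_norm ({..<fst mT} \<times> {..<1})
           (\<lambda>(p, j) (q, k) y b. \<Sum>x\<in>UNIV. \<Sum>a\<in>UNIV. snd mT p q a x * \<omega> j k x a y b)) \<le> O_lowc_norm 1 \<omega>"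
    unfolding I_def Z_def mT by simp
qed

theorem theorem5p14:
  fixes dummy :: "'x::finite \<times> 'a::finite \<times> 'y::finite \<times> 'b::finite"
  shows "(\<forall>n (\<omega> :: nat \<Rightarrow> nat \<Rightarrow> 'x \<Rightarrow> 'a \<Rightarrow> 'y \<Rightarrow> 'b \<Rightarrow> complex).
            O_lowc_norm n \<omega> \<le> pi2C n \<omega>)
       \<and> (\<forall>\<omega> :: nat \<Rightarrow> nat \<Rightarrow> 'x \<Rightarrow> 'a \<Rightarrow> 'y \<Rightarrow> 'b \<Rightarrow> complex.
            O_lowc_norm 1 \<omega> = pi2C 1 \<omega>)"
  using O_lowc_norm_le_pi2C pi2C_le_O_lowc by (blast intro: antisym)

end
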